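(* Let $c<d$ and for each $i\in\mathbb{N}$ let $T_i=\{(x,y):\alpha_i(y)\le x\le\beta_i(y),\ c<y\le d_i\}\subset\mathbb{R}\times(c,d]$ be a half open trapezoid, where $d_i\in(c,d]$ and $\alpha_i,\beta_i:(c,d_i]\to\mathbb{R}$ are continuous with $\alpha_i<\beta_i$. Suppose $T_i\cap T_j=\varnothing$ for $i\neq j$ and $\lim_{i\to\infty}d_i=c$. Then there exists a homeomorphism $\eta:\mathbb{R}\times(c,d]\to\mathbb{R}\times(c,d]$ such that $\eta(\mathbb{R}\times y)=\mathbb{R}\times y$ for all $y\in(c,d]$, and each $\eta(T_i)$ is a half open rectangle, i.e. of the form $[p_i,q_i]\times(c,d_i]$ for some $p_i<q_i$.
   Context: A half open trapezoid is a set $\{(x,y):\alpha(y)\le x\le\beta(y),\ c'<y\le d'\}$ with $\alpha<\beta$ continuous on $(c',d']$; $d'$ is the level of its upper base. It is a half open rectangle if $\alpha,\beta$ are constant. *)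

theory Defs
  imports "HOL-Analysis.Analysis"
begin

definition half_open_trapezoid ::
  "real \<Rightarrow> real \<Rightarrow> (real \<Rightarrow> real) \<Rightarrow> (real \<Rightarrow> real) \<Rightarrow> (real \<times> real) set" where
  "half_open_trapezoid c d' \<alpha> \<beta> = {(x, y). \<alpha> y \<le> x \<and> x \<le> \<beta> y \<and> c < y \<and> y \<le> d'}"

end

theory Submission
  imports Defs "HOL-Homology.Invariance_of_Domain"
begin

text \<open>Enumerate the trapezoids by decreasing height of their upper bases (possible since only
  finitely many bases lie above any level \<open>y > c\<close>) and straighten them one at a time.
  Step \<open>n\<close> composes every level \<open>y\<close> with a piecewise linear increasing bijection of \<open>\<real>\<close> that
  moves the current images of the two edges of the \<open>n\<close>-th trapezoid to their values at its top
  level. It is the identity above that top, and outside a window that avoids the already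
  straightened trapezoids; a trapezoid of lower rank lies entirely to the left or to the right
  of the \<open>n\<close>-th one, because edges cannot cross without the trapezoids meeting. Each level
  \<open>y\<close> is moved by finitely many steps only, so the limit map is a continuous bijection of
  \<open>\<real> \<times> (c,\<infinity>)\<close> preserving levels, hence a homeomorphism by invariance of domain.\<close>

definition clamp :: "real \<Rightarrow> real \<Rightarrow> real \<Rightarrow> real" where
  "clamp a b x = max a (min x b)"

text \<open>The piecewise linear map fixing \<open>(-\<infinity>,l]\<close> and \<open>[r,\<infinity>)\<close>, sending \<open>u \<mapsto> s\<close> and \<open>v \<mapsto> t\<close>.\<close>

definition pl_map :: "real \<Rightarrow> real \<Rightarrow> real \<Rightarrow> real \<Rightarrow> real \<Rightarrow> real \<Rightarrow> real \<Rightarrow> real" where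
  "pl_map l r u v s t x = x + ((s - l) / (u - l) - 1) * (clamp l u x - l)
     + ((t - s) / (v - u) - 1) * (clamp u v x - u) + ((r - t) / (r - v) - 1) * (clamp v r x - v)"

lemma divide_minus_one_mult: "(y::real) \<noteq> 0 \<Longrightarrow> (x / y - 1) * y = x - y"
  by (simp add: left_diff_distrib)

lemma pl_map_id: "pl_map l r s t s t x = x"
  by (cases "s = l"; cases "t = s"; cases "r = t") (simp_all add: pl_map_def clamp_def)

lemma pl_map_below: "l \<le> u \<Longrightarrow> u \<le> v \<Longrightarrow> x \<le> l \<Longrightarrow> pl_map l r u v s t x = x"
  by (simp add: pl_map_def clamp_def)

lemma pl_map_above:
  assumes "l < u" "u < v" "v < r" "r \<le> x"
  shows "pl_map l r u v s t x = x"
proof -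
  have "clamp l u x = u" "clamp u v x = v" "clamp v r x = r"
    using assms by (auto simp: clamp_def)
  then show ?thesis
    using assms divide_minus_one_mult[of "u - l"] divide_minus_one_mult[of "v - u"]
      divide_minus_one_mult[of "r - v"]
    by (simp add: pl_map_def)
qed

lemma pl_map_at_left: "l < u \<Longrightarrow> u < v \<Longrightarrow> v < r \<Longrightarrow> pl_map l r u v s t u = s"
  using divide_minus_one_mult[of "u - l"] by (simp add: pl_map_def clamp_def)

lemma pl_map_at_right: "l < u \<Longrightarrow> u < v \<Longrightarrow> v < r \<Longrightarrow> pl_map l r u v s t v = t"
  using divide_minus_one_mult[of "u - l"] divide_minus_one_mult[of "v - u"]
  by (simp add: pl_map_def clamp_def)

lemma strict_mono_pl_map:
  assumes "l < u" "u < v" "v < r" "l < s" "s < t" "t < r"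
  shows "strict_mono (pl_map l r u v s t)"
proof (rule strict_monoI)
  fix x x' :: real
  assume "x < x'"
  define m1 m2 m3 where "m1 = (s - l) / (u - l)" and "m2 = (t - s) / (v - u)"
    and "m3 = (r - t) / (r - v)"
  define c1 c2 c3 where "c1 = (\<lambda>x. clamp l u x - l)" and "c2 = (\<lambda>x. clamp u v x - u)"
    and "c3 = (\<lambda>x. clamp v r x - v)"
  have slopes: "m1 > 0" "m2 > 0" "m3 > 0"
    using assms by (auto simp: m1_def m2_def m3_def)
  \<comment> \<open>a sum of nondecreasing pieces, with positive weights, whose increments add up to \<open>x' - x\<close>\<close>
  have split: "pl_map l r u v s t x = (x - c1 x - c2 x - c3 x) + m1 * c1 x + m2 * c2 x + m3 * c3 x"
    for x by (simp add: pl_map_def m1_def m2_def m3_def c1_def c2_def c3_def algebra_simps)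
  have "c1 x \<le> c1 x'" "c2 x \<le> c2 x'" "c3 x \<le> c3 x'"
    using \<open>x < x'\<close> by (auto simp: c1_def c2_def c3_def clamp_def)
  moreover have "x - c1 x - c2 x - c3 x \<le> x' - c1 x' - c2 x' - c3 x'"
    using \<open>x < x'\<close> assms by (auto simp: c1_def c2_def c3_def clamp_def max_def min_def)
  ultimately have "m1 * c1 x + m2 * c2 x + m3 * c3 x + (x - c1 x - c2 x - c3 x)
      < m1 * c1 x' + m2 * c2 x' + m3 * c3 x' + (x' - c1 x' - c2 x' - c3 x')"
    using slopes \<open>x < x'\<close> mult_left_mono[of _ _ m1] mult_left_mono[of _ _ m2]
      mult_left_mono[of _ _ m3] mult_strict_left_mono[of _ _ m1] mult_strict_left_mono[of _ _ m2]
      mult_strict_left_mono[of _ _ m3]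
    by (smt (verit))
  then show "pl_map l r u v s t x < pl_map l r u v s t x'"
    unfolding split by simp
qed

lemma continuous_on_pl_map [continuous_intros]:
  assumes "continuous_on S fl" "continuous_on S fr" "continuous_on S fu" "continuous_on S fv"
    "continuous_on S fs" "continuous_on S ft" "continuous_on S fx"
    and "\<And>z. z \<in> S \<Longrightarrow> fl z < fu z \<and> fu z < fv z \<and> fv z < fr z"
  shows "continuous_on S (\<lambda>z. pl_map (fl z) (fr z) (fu z) (fv z) (fs z) (ft z) (fx z))"
  unfolding pl_map_def clamp_def using assms by (intro continuous_intros) force+

lemma surj_pl_map:
  assumes "l < u" "u < v" "v < r"
  shows "surj (pl_map l r u v s t)"
proof -
  have "\<exists>x. pl_map l r u v s t x = z" for z
  proof -
    have "continuous_on {min z l..max z r} (pl_map l r u v s t)"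
      using assms by (intro continuous_intros) auto
    moreover have "pl_map l r u v s t (min z l) \<le> z" "z \<le> pl_map l r u v s t (max z r)"
      using assms by (simp_all add: pl_map_below pl_map_above)
    moreover have "min z l \<le> max z r"
      by simp
    ultimately show ?thesis
      using IVT'[of "pl_map l r u v s t" "min z l" z "max z r"] by blast
  qed
  then show ?thesis by (metis surjI)
qed

lemma continuous_on_Max_insert:
  fixes f :: "'a::topological_space \<Rightarrow> 'b::linorder_topology"
  assumes "finite K" "continuous_on S f"
  shows "continuous_on S (\<lambda>y. Max (insert (f y) K))"
proof (cases "K = {}")
  case False
  then show ?thesis
    using assms by (simp add: Max_insert continuous_intros)
qed (use assms in simp)

lemma continuous_on_Min_insert:
  fixes f :: "'a::topological_space \<Rightarrow> 'b::linorder_topology"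
  assumes "finite K" "continuous_on S f"
  shows "continuous_on S (\<lambda>y. Min (insert (f y) K))"
proof (cases "K = {}")
  case False
  then show ?thesis
    using assms by (simp add: Min_insert continuous_intros)
qed (use assms in simp)

lemma continuous_on_comp_snd:
  "continuous_on A h \<Longrightarrow> continuous_on (B \<times> A) (\<lambda>z. h (snd z))"
  by (rule continuous_on_compose2[OF _ continuous_on_snd[OF continuous_on_id]]) auto

lemma decreasing_ranking_exists:
  fixes f :: "nat \<Rightarrow> 'a::linorder"
  assumes "\<And>i. finite {j. f i \<le> f j}"
  shows "\<exists>r :: nat \<Rightarrow> nat. inj r \<and> (\<forall>j k. r k < r j \<longrightarrow> f j \<le> f k)"
proof -
  define before where "before j i \<longleftrightarrow> f i < f j \<or> (f i = f j \<and> j < i)" for j i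
  define r where "r i = card {j. before j i}" for i
  have finite_before: "finite {j. before j i}" for i
    using assms[of i] by (rule finite_subset[rotated]) (auto simp: before_def)
  have r_less: "r j < r i" if "before j i" for i j
  proof -
    have "{k. before k j} \<subset> {k. before k i}"
      using that by (auto simp: before_def)
    then show ?thesis
      unfolding r_def using finite_before psubset_card_mono by blast
  qed
  have total: "i \<noteq> j \<Longrightarrow> before i j \<or> before j i" for i j
    by (auto simp: before_def)
  have "inj r"
    by (rule injI) (metis less_irrefl r_less total)
  moreover have "f j \<le> f k" if "r k < r j" for j k
    using that total[of k j] r_less[of j k] by (cases "k = j") (auto simp: before_def)
  ultimately show ?thesis by blast
qed

locale disjoint_trapezoids =
  fixes c :: real and dd :: "nat \<Rightarrow> real" and \<alpha> \<beta> :: "nat \<Rightarrow> real \<Rightarrow> real"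
  assumes c_less_dd: "\<And>i. c < dd i"
    and continuous_\<alpha>: "\<And>i. continuous_on {c<..dd i} (\<alpha> i)"
    and continuous_\<beta>: "\<And>i. continuous_on {c<..dd i} (\<beta> i)"
    and \<alpha>_less_\<beta>: "\<And>i y. y \<in> {c<..dd i} \<Longrightarrow> \<alpha> i y < \<beta> i y"
    and trapezoids_disjoint: "\<And>i j. i \<noteq> j \<Longrightarrow>
           half_open_trapezoid c (dd i) (\<alpha> i) (\<beta> i) \<inter> half_open_trapezoid c (dd j) (\<alpha> j) (\<beta> j) = {}"
    and dd_tendsto: "dd \<longlonglongrightarrow> c"
begin

lemma finite_bases_above: "c < y \<Longrightarrow> finite {i. y \<le> dd i}"
proof -
  assume "c < y"
  then obtain N where "\<And>n. n \<ge> N \<Longrightarrow> dd n < y"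
    using order_tendstoD(2)[OF dd_tendsto] by (auto simp: eventually_sequentially)
  then have "{i. y \<le> dd i} \<subseteq> {..<N}"
    by (force simp: not_le[symmetric])
  then show ?thesis
    using finite_subset by blast
qed

lemma edges_separated_at:
  assumes "i \<noteq> k" "y \<in> {c<..dd i}" "dd i \<le> dd k"
  shows "\<beta> i y < \<alpha> k y \<or> \<beta> k y < \<alpha> i y"
proof (rule ccontr)
  assume "\<not> ?thesis"
  then have "(max (\<alpha> i y) (\<alpha> k y), y) \<in> half_open_trapezoid c (dd i) (\<alpha> i) (\<beta> i)
      \<inter> half_open_trapezoid c (dd k) (\<alpha> k) (\<beta> k)"
    using assms \<alpha>_less_\<beta>[of y i] \<alpha>_less_\<beta>[of y k] by (auto simp: half_open_trapezoid_def)
  then show False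
    using trapezoids_disjoint[OF assms(1)] by blast
qed

text \<open>The separating inequality cannot switch along \<open>(c, dd i]\<close>, by the intermediate value
  theorem applied to the difference of the two gaps.\<close>

lemma trapezoid_left_or_right:
  assumes "i \<noteq> k" "dd i \<le> dd k"
  shows "(\<forall>y\<in>{c<..dd i}. \<beta> i y < \<alpha> k y) \<or> (\<forall>y\<in>{c<..dd i}. \<beta> k y < \<alpha> i y)"
proof (rule ccontr)
  assume "\<not> ?thesis"
  then obtain y1 y2 where y1: "y1 \<in> {c<..dd i}" "\<not> \<beta> i y1 < \<alpha> k y1"
    and y2: "y2 \<in> {c<..dd i}" "\<not> \<beta> k y2 < \<alpha> i y2"
    by auto
  define f where "f y = (\<alpha> k y - \<beta> i y) - (\<alpha> i y - \<beta> k y)" for y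
  have sub: "{c<..dd i} \<subseteq> {c<..dd k}"
    using assms by auto
  have sign: "f y > 0 \<longleftrightarrow> \<beta> i y < \<alpha> k y" "f y < 0 \<longleftrightarrow> \<beta> k y < \<alpha> i y"
    if "y \<in> {c<..dd i}" for y
    using edges_separated_at[OF assms(1) that assms(2)] \<alpha>_less_\<beta>[OF that]
      \<alpha>_less_\<beta>[of y k] that sub
    unfolding f_def by force+
  have "{min y1 y2..max y1 y2} \<subseteq> {c<..dd i}"
    using y1 y2 by auto
  moreover have "continuous_on {min y1 y2..max y1 y2} f"
    unfolding f_def
    using calculation sub
    by (intro continuous_intros continuous_on_subset[OF continuous_\<alpha>]
        continuous_on_subset[OF continuous_\<beta>]) auto
  moreover have "f y1 < 0" "f y2 > 0"
    using sign y1 y2 edges_separated_at[OF assms(1) _ assms(2)] by blast+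
  ultimately obtain y where "y \<in> {c<..dd i}" "f y = 0"
    using IVT'[of f y1 0 y2] IVT2'[of f y1 0 y2] by (cases "y1 \<le> y2") (auto simp: min_def max_def)
  then show False
    using sign edges_separated_at[OF assms(1) _ assms(2)] by force
qed

definition rank :: "nat \<Rightarrow> nat" where
  "rank = (SOME r. inj r \<and> (\<forall>j k. r k < r j \<longrightarrow> dd j \<le> dd k))"

lemma inj_rank: "inj rank" and rank_less_imp_dd_le: "rank k < rank j \<Longrightarrow> dd j \<le> dd k"
proof -
  have "\<exists>r :: nat \<Rightarrow> nat. inj r \<and> (\<forall>j k. r k < r j \<longrightarrow> dd j \<le> dd k)"
    using finite_bases_above c_less_dd by (intro decreasing_ranking_exists) blast
  then have "inj rank \<and> (\<forall>j k. rank k < rank j \<longrightarrow> dd j \<le> dd k)"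
    unfolding rank_def by (rule someI_ex)
  then show "inj rank" "rank k < rank j \<Longrightarrow> dd j \<le> dd k"
    by auto
qed

lemma finite_rank_less: "finite {k. rank k < n}"
  using finite_vimageI[OF _ inj_rank, of "{..<n}"] by (simp add: vimage_def)

definition trapezoid_of_rank :: "nat \<Rightarrow> nat" where
  "trapezoid_of_rank n = inv_into UNIV rank n"

definition top_level :: "nat \<Rightarrow> real" where
  "top_level n = dd (trapezoid_of_rank n)"

definition edge :: "(nat \<Rightarrow> real \<Rightarrow> real) \<Rightarrow> nat \<Rightarrow> (real \<Rightarrow> real \<Rightarrow> real) \<Rightarrow> real \<Rightarrow> real" where
  "edge \<gamma> n \<phi> y = \<phi> (\<gamma> (trapezoid_of_rank n) (min y (top_level n))) (min y (top_level n))"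

definition left_of :: "nat \<Rightarrow> nat set" where
  "left_of n = {k. rank k < n \<and> (\<forall>z\<in>{c<..top_level n}. \<beta> k z < \<alpha> (trapezoid_of_rank n) z)}"

definition right_of :: "nat \<Rightarrow> nat set" where
  "right_of n = {k. rank k < n \<and> (\<forall>z\<in>{c<..top_level n}. \<beta> (trapezoid_of_rank n) z < \<alpha> k z)}"

text \<open>The window contains the edge images both at level \<open>y\<close> and at the top level, and misses
  the (already constant) images of the trapezoids of lower rank; the margin \<open>1\<close> keeps it
  nondegenerate when no such trapezoid lies on that side.\<close>

definition window_left :: "nat \<Rightarrow> (real \<Rightarrow> real \<Rightarrow> real) \<Rightarrow> real \<Rightarrow> real" where
  "window_left n \<phi> y = Max (insert (min (edge \<alpha> n \<phi> y) (edge \<alpha> n \<phi> (top_level n)) - 1)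
     ((\<lambda>k. \<phi> (\<beta> k (dd k)) (dd k)) ` left_of n))"

definition window_right :: "nat \<Rightarrow> (real \<Rightarrow> real \<Rightarrow> real) \<Rightarrow> real \<Rightarrow> real" where
  "window_right n \<phi> y = Min (insert (max (edge \<beta> n \<phi> y) (edge \<beta> n \<phi> (top_level n)) + 1)
     ((\<lambda>k. \<phi> (\<alpha> k (dd k)) (dd k)) ` right_of n))"

definition step :: "nat \<Rightarrow> (real \<Rightarrow> real \<Rightarrow> real) \<Rightarrow> real \<Rightarrow> real \<Rightarrow> real" where
  "step n \<phi> x y = (if n \<in> range rank then
     pl_map (window_left n \<phi> y) (window_right n \<phi> y) (edge \<alpha> n \<phi> y) (edge \<beta> n \<phi> y)
       (edge \<alpha> n \<phi> (top_level n)) (edge \<beta> n \<phi> (top_level n)) x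
   else x)"

primrec straighten :: "nat \<Rightarrow> real \<Rightarrow> real \<Rightarrow> real" where
  "straighten 0 = (\<lambda>x y. x)"
| "straighten (Suc n) = (\<lambda>x y. step n (straighten n) (straighten n x y) y)"

definition straightens :: "(real \<Rightarrow> real \<Rightarrow> real) \<Rightarrow> nat \<Rightarrow> bool" where
  "straightens \<phi> n \<longleftrightarrow> continuous_on (UNIV \<times> {c<..}) (\<lambda>z. \<phi> (fst z) (snd z))
     \<and> (\<forall>y>c. strict_mono (\<lambda>x. \<phi> x y)) \<and> (\<forall>y>c. surj (\<lambda>x. \<phi> x y))
     \<and> (\<forall>k. rank k < n \<longrightarrow> (\<forall>y\<in>{c<..dd k}. \<phi> (\<alpha> k y) y = \<phi> (\<alpha> k (dd k)) (dd k)
                                          \<and> \<phi> (\<beta> k y) y = \<phi> (\<beta> k (dd k)) (dd k)))"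

lemma
  assumes "straightens \<phi> n"
  shows straightens_continuous: "continuous_on (UNIV \<times> {c<..}) (\<lambda>z. \<phi> (fst z) (snd z))"
    and straightens_strict_mono: "c < y \<Longrightarrow> strict_mono (\<lambda>x. \<phi> x y)"
    and straightens_surj: "c < y \<Longrightarrow> surj (\<lambda>x. \<phi> x y)"
    and straightens_edges: "rank k < n \<Longrightarrow> y \<in> {c<..dd k} \<Longrightarrow>
           \<phi> (\<alpha> k y) y = \<phi> (\<alpha> k (dd k)) (dd k) \<and> \<phi> (\<beta> k y) y = \<phi> (\<beta> k (dd k)) (dd k)"
  using assms unfolding straightens_def by blast+

lemma straightens_0: "straightens (\<lambda>x y. x) 0"
  unfolding straightens_def by (auto simp: strict_mono_def intro: continuous_intros)

lemma rank_trapezoid_of_rank: "n \<in> range rank \<Longrightarrow> rank (trapezoid_of_rank n) = n"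
  by (simp add: trapezoid_of_rank_def f_inv_into_f)

lemma c_less_top_level: "c < top_level n"
  using c_less_dd by (simp add: top_level_def)

lemma edge_below_top: "y \<le> top_level n \<Longrightarrow> edge \<gamma> n \<phi> y = \<phi> (\<gamma> (trapezoid_of_rank n) y) y"
  by (simp add: edge_def)

lemma step_above_top: "top_level n \<le> y \<Longrightarrow> step n \<phi> x y = x"
  by (simp add: step_def edge_def pl_map_id min_absorb2)

lemma finite_left_of: "finite (left_of n)" and finite_right_of: "finite (right_of n)"
  using finite_rank_less by (auto simp: left_of_def right_of_def elim: finite_subset[rotated])

lemma continuous_on_edge:
  assumes "straightens \<phi> n" and "\<And>i. continuous_on {c<..dd i} (\<gamma> i)"
  shows "continuous_on {c<..} (edge \<gamma> n \<phi>)"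
proof -
  let ?D = "top_level n" and ?g = "\<gamma> (trapezoid_of_rank n)"
  have min_in: "(\<lambda>y. min y ?D) ` {c<..} \<subseteq> {c<..?D}"
    using c_less_top_level by auto
  have "continuous_on {c<..?D} ?g"
    using assms(2) by (simp add: top_level_def)
  then have "continuous_on {c<..} (\<lambda>y. ?g (min y ?D))"
    using continuous_on_compose2[OF _ continuous_on_min[OF continuous_on_id continuous_on_const] min_in]
    by blast
  then have "continuous_on {c<..} (\<lambda>y. (?g (min y ?D), min y ?D))"
    by (intro continuous_intros)
  moreover have "(\<lambda>y. (?g (min y ?D), min y ?D)) ` {c<..} \<subseteq> UNIV \<times> {c<..}"
    using c_less_top_level by auto
  ultimately show ?thesis
    unfolding edge_def[abs_def]
    using continuous_on_compose2[OF straightens_continuous[OF assms(1)]] by fastforce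
qed

lemma continuous_on_window_left: "straightens \<phi> n \<Longrightarrow> continuous_on {c<..} (window_left n \<phi>)"
  unfolding window_left_def[abs_def]
  by (rule continuous_on_Max_insert)
    (auto simp: finite_left_of intro!: continuous_intros continuous_on_edge continuous_\<alpha>)

lemma continuous_on_window_right: "straightens \<phi> n \<Longrightarrow> continuous_on {c<..} (window_right n \<phi>)"
  unfolding window_right_def[abs_def]
  by (rule continuous_on_Min_insert)
    (auto simp: finite_right_of intro!: continuous_intros continuous_on_edge continuous_\<beta>)

lemma edge_less_edge:
  assumes "straightens \<phi> n" "c < y"
  shows "edge \<alpha> n \<phi> y < edge \<beta> n \<phi> y"
proof -
  have "min y (top_level n) \<in> {c<..dd (trapezoid_of_rank n)}"
    using assms(2) c_less_top_level by (auto simp: top_level_def)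
  then show ?thesis
    unfolding edge_def using \<alpha>_less_\<beta> strict_monoD[OF straightens_strict_mono[OF assms(1)]] by auto
qed

lemma frozen_left_less_edge:
  assumes "straightens \<phi> n" "n \<in> range rank" "k \<in> left_of n" "c < y"
  shows "\<phi> (\<beta> k (dd k)) (dd k) < edge \<alpha> n \<phi> y"
proof -
  let ?i = "trapezoid_of_rank n" and ?w = "min y (top_level n)"
  have "rank k < rank ?i"
    using assms(2,3) by (simp add: left_of_def rank_trapezoid_of_rank)
  then have "?w \<in> {c<..dd k}"
    using rank_less_imp_dd_le assms(4) c_less_top_level by (force simp: top_level_def)
  then have "\<phi> (\<beta> k (dd k)) (dd k) = \<phi> (\<beta> k ?w) ?w"
    using straightens_edges[OF assms(1)] assms(3) by (simp add: left_of_def)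
  also have "\<dots> < \<phi> (\<alpha> ?i ?w) ?w"
    using assms(3,4) c_less_top_level strict_monoD[OF straightens_strict_mono[OF assms(1)]]
    by (simp add: left_of_def)
  finally show ?thesis
    by (simp add: edge_def)
qed

lemma edge_less_frozen_right:
  assumes "straightens \<phi> n" "n \<in> range rank" "k \<in> right_of n" "c < y"
  shows "edge \<beta> n \<phi> y < \<phi> (\<alpha> k (dd k)) (dd k)"
proof -
  let ?i = "trapezoid_of_rank n" and ?w = "min y (top_level n)"
  have "rank k < rank ?i"
    using assms(2,3) by (simp add: right_of_def rank_trapezoid_of_rank)
  then have "?w \<in> {c<..dd k}"
    using rank_less_imp_dd_le assms(4) c_less_top_level by (force simp: top_level_def)
  then have "\<phi> (\<alpha> k (dd k)) (dd k) = \<phi> (\<alpha> k ?w) ?w"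
    using straightens_edges[OF assms(1)] assms(3) by (simp add: right_of_def)
  moreover have "\<phi> (\<beta> ?i ?w) ?w < \<phi> (\<alpha> k ?w) ?w"
    using assms(3,4) c_less_top_level strict_monoD[OF straightens_strict_mono[OF assms(1)]]
    by (simp add: right_of_def)
  ultimately show ?thesis
    by (simp add: edge_def)
qed

lemma window_order:
  assumes "straightens \<phi> n" "n \<in> range rank" "c < y"
  shows "window_left n \<phi> y < edge \<alpha> n \<phi> y" "window_left n \<phi> y < edge \<alpha> n \<phi> (top_level n)"
    "edge \<alpha> n \<phi> y < edge \<beta> n \<phi> y" "edge \<alpha> n \<phi> (top_level n) < edge \<beta> n \<phi> (top_level n)"
    "edge \<beta> n \<phi> y < window_right n \<phi> y" "edge \<beta> n \<phi> (top_level n) < window_right n \<phi> y"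
proof -
  have top: "c < top_level n"
    by (rule c_less_top_level)
  show "edge \<alpha> n \<phi> y < edge \<beta> n \<phi> y"
    "edge \<alpha> n \<phi> (top_level n) < edge \<beta> n \<phi> (top_level n)"
    using edge_less_edge[OF assms(1)] assms(3) top by auto
  show "window_left n \<phi> y < edge \<alpha> n \<phi> y" "window_left n \<phi> y < edge \<alpha> n \<phi> (top_level n)"
    using frozen_left_less_edge[OF assms(1,2)] assms(3) top
    by (auto simp: window_left_def finite_left_of)
  show "edge \<beta> n \<phi> y < window_right n \<phi> y" "edge \<beta> n \<phi> (top_level n) < window_right n \<phi> y"
    using edge_less_frozen_right[OF assms(1,2)] assms(3) top
    by (auto simp: window_right_def finite_right_of)
qed

lemma step_eq_pl_map:
  "n \<in> range rank \<Longrightarrow> step n \<phi> x y = pl_map (window_left n \<phi> y) (window_right n \<phi> y)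
     (edge \<alpha> n \<phi> y) (edge \<beta> n \<phi> y) (edge \<alpha> n \<phi> (top_level n)) (edge \<beta> n \<phi> (top_level n)) x"
  by (simp add: step_def)

lemma lower_rank_left_or_right:
  assumes "n \<in> range rank" "rank k < n"
  shows "k \<in> left_of n \<or> k \<in> right_of n"
proof -
  let ?i = "trapezoid_of_rank n"
  have "?i \<noteq> k" "dd ?i \<le> dd k"
    using rank_less_imp_dd_le[of k ?i] assms rank_trapezoid_of_rank by auto
  from trapezoid_left_or_right[OF this] show ?thesis
  proof
    assume "\<forall>y\<in>{c<..dd ?i}. \<beta> ?i y < \<alpha> k y"
    then have "k \<in> right_of n"
      using assms(2) by (simp add: right_of_def top_level_def)
    then show ?thesis ..
  next
    assume "\<forall>y\<in>{c<..dd ?i}. \<beta> k y < \<alpha> ?i y"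
    then have "k \<in> left_of n"
      using assms(2) by (simp add: left_of_def top_level_def)
    then show ?thesis ..
  qed
qed

lemma frozen_le_window_left: "k \<in> left_of n \<Longrightarrow> \<phi> (\<beta> k (dd k)) (dd k) \<le> window_left n \<phi> w"
  unfolding window_left_def using finite_left_of by (intro Max_ge) auto

lemma window_right_le_frozen: "k \<in> right_of n \<Longrightarrow> window_right n \<phi> w \<le> \<phi> (\<alpha> k (dd k)) (dd k)"
  unfolding window_right_def using finite_right_of by (intro Min_le) auto

lemma step_fixes_frozen:
  assumes "straightens \<phi> n" "rank k < n" "c < w"
    and "v \<in> {\<phi> (\<alpha> k (dd k)) (dd k), \<phi> (\<beta> k (dd k)) (dd k)}"
  shows "step n \<phi> v w = v"
proof (cases "n \<in> range rank")
  case True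
  have "\<phi> (\<alpha> k (dd k)) (dd k) < \<phi> (\<beta> k (dd k)) (dd k)"
    using c_less_dd[of k] \<alpha>_less_\<beta>[of "dd k" k]
      strict_monoD[OF straightens_strict_mono[OF assms(1)]] by auto
  then have v: "\<phi> (\<alpha> k (dd k)) (dd k) \<le> v" "v \<le> \<phi> (\<beta> k (dd k)) (dd k)"
    using assms(4) by auto
  note order = window_order[OF assms(1) True assms(3)]
  from lower_rank_left_or_right[OF True assms(2)] show ?thesis
    unfolding step_eq_pl_map[OF True]
  proof
    assume "k \<in> left_of n"
    then have "\<phi> (\<beta> k (dd k)) (dd k) \<le> window_left n \<phi> w"
      by (rule frozen_le_window_left)
    then have "v \<le> window_left n \<phi> w"
      using v(2) by simp
    then show "pl_map (window_left n \<phi> w) (window_right n \<phi> w) (edge \<alpha> n \<phi> w) (edge \<beta> n \<phi> w)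
        (edge \<alpha> n \<phi> (top_level n)) (edge \<beta> n \<phi> (top_level n)) v = v"
      using order by (intro pl_map_below) auto
  next
    assume "k \<in> right_of n"
    then have "window_right n \<phi> w \<le> \<phi> (\<alpha> k (dd k)) (dd k)"
      by (rule window_right_le_frozen)
    then have "window_right n \<phi> w \<le> v"
      using v(1) by simp
    then show "pl_map (window_left n \<phi> w) (window_right n \<phi> w) (edge \<alpha> n \<phi> w) (edge \<beta> n \<phi> w)
        (edge \<alpha> n \<phi> (top_level n)) (edge \<beta> n \<phi> (top_level n)) v = v"
      using order by (intro pl_map_above) auto
  qed
qed (simp add: step_def)

lemma strict_mono_step:
  assumes "straightens \<phi> n" "c < y"
  shows "strict_mono (\<lambda>x. step n \<phi> x y)"
proof (cases "n \<in> range rank")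
  case True
  then show ?thesis
    unfolding step_eq_pl_map[OF True]
    using window_order[OF assms(1) True assms(2)] by (intro strict_mono_pl_map) auto
qed (simp add: step_def strict_mono_def)

lemma surj_step:
  assumes "straightens \<phi> n" "c < y"
  shows "surj (\<lambda>x. step n \<phi> x y)"
proof (cases "n \<in> range rank")
  case True
  then show ?thesis
    unfolding step_eq_pl_map[OF True]
    using window_order[OF assms(1) True assms(2)] by (intro surj_pl_map) auto
qed (simp add: step_def)

lemma continuous_on_step:
  assumes "straightens \<phi> n"
  shows "continuous_on (UNIV \<times> {c<..}) (\<lambda>z. step n \<phi> (\<phi> (fst z) (snd z)) (snd z))"
proof (cases "n \<in> range rank")
  case True
  show ?thesis
    unfolding step_eq_pl_map[OF True]
  proof (rule continuous_on_pl_map)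
    show "continuous_on (UNIV \<times> {c<..}) (\<lambda>z. window_left n \<phi> (snd z))"
      "continuous_on (UNIV \<times> {c<..}) (\<lambda>z. window_right n \<phi> (snd z))"
      "continuous_on (UNIV \<times> {c<..}) (\<lambda>z. edge \<alpha> n \<phi> (snd z))"
      "continuous_on (UNIV \<times> {c<..}) (\<lambda>z. edge \<beta> n \<phi> (snd z))"
      by (intro continuous_on_comp_snd continuous_on_window_left continuous_on_window_right
          continuous_on_edge assms continuous_\<alpha> continuous_\<beta>)+
    show "continuous_on (UNIV \<times> {c<..}) (\<lambda>z. \<phi> (fst z) (snd z))"
      by (rule straightens_continuous[OF assms])
  next
    fix z :: "real \<times> real"
    assume "z \<in> UNIV \<times> {c<..}"
    then show "window_left n \<phi> (snd z) < edge \<alpha> n \<phi> (snd z)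
        \<and> edge \<alpha> n \<phi> (snd z) < edge \<beta> n \<phi> (snd z) \<and> edge \<beta> n \<phi> (snd z) < window_right n \<phi> (snd z)"
      using window_order[OF assms True] by auto
  qed (rule continuous_on_const)+
qed (simp add: step_def straightens_continuous[OF assms])

lemma step_straightens_edges:
  assumes "straightens \<phi> n" "n \<in> range rank" "y \<in> {c<..top_level n}"
  shows "step n \<phi> (\<phi> (\<alpha> (trapezoid_of_rank n) y) y) y = edge \<alpha> n \<phi> (top_level n)"
    and "step n \<phi> (\<phi> (\<beta> (trapezoid_of_rank n) y) y) y = edge \<beta> n \<phi> (top_level n)"
  using window_order[OF assms(1,2)] assms(3)
  by (simp_all add: step_eq_pl_map[OF assms(2)] edge_below_top[symmetric]
      pl_map_at_left pl_map_at_right)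

lemma straightens_Suc:
  assumes "straightens \<phi> n"
  shows "straightens (\<lambda>x y. step n \<phi> (\<phi> x y) y) (Suc n)"
proof -
  have "strict_mono (\<lambda>x. step n \<phi> (\<phi> x y) y)" if "c < y" for y
    using strict_mono_step[OF assms that] straightens_strict_mono[OF assms that]
    by (simp add: strict_mono_def)
  moreover have "surj (\<lambda>x. step n \<phi> (\<phi> x y) y)" if "c < y" for y
    using comp_surj[OF straightens_surj[OF assms that] surj_step[OF assms that]]
    by (simp add: comp_def)
  moreover have "step n \<phi> (\<phi> (\<alpha> k y) y) y = step n \<phi> (\<phi> (\<alpha> k (dd k)) (dd k)) (dd k)
      \<and> step n \<phi> (\<phi> (\<beta> k y) y) y = step n \<phi> (\<phi> (\<beta> k (dd k)) (dd k)) (dd k)"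
    if "rank k < Suc n" "y \<in> {c<..dd k}" for k y
  proof (cases "rank k = n")
    case True
    then have k: "k = trapezoid_of_rank n" and n: "n \<in> range rank"
      using inj_rank by (auto simp: trapezoid_of_rank_def)
    then have "y \<in> {c<..top_level n}" "dd k \<in> {c<..top_level n}"
      using that(2) c_less_dd[of k] by (auto simp: top_level_def)
    then show ?thesis
      using step_straightens_edges[OF assms n] k by simp
  next
    case False
    let ?a = "\<phi> (\<alpha> k (dd k)) (dd k)" and ?b = "\<phi> (\<beta> k (dd k)) (dd k)"
    have "rank k < n"
      using that(1) False by simp
    then have "\<phi> (\<alpha> k y) y = ?a" "\<phi> (\<beta> k y) y = ?b"
      using straightens_edges[OF assms _ that(2)] by auto
    moreover have "step n \<phi> v w = v" if "v \<in> {?a, ?b}" "c < w" for v w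
      using step_fixes_frozen[OF assms \<open>rank k < n\<close> that(2,1)] .
    ultimately show ?thesis
      using that(2) c_less_dd[of k] by simp
  qed
  ultimately show ?thesis
    unfolding straightens_def using continuous_on_step[OF assms] by blast
qed

lemma straightens_straighten: "straightens (straighten n) n"
  by (induction n) (simp_all add: straightens_0 straightens_Suc)

text \<open>Only trapezoids reaching above level \<open>y\<close> are moved at level \<open>y\<close>, so from stage
  \<open>stage y\<close> on the level \<open>y\<close> no longer changes.\<close>

definition stage :: "real \<Rightarrow> nat" where
  "stage y = Suc (Max (insert 0 (rank ` {i. y < dd i})))"

lemma finite_bases_strictly_above: "c < y \<Longrightarrow> finite {i. y < dd i}"
  using finite_bases_above by (rule finite_subset[rotated]) auto

lemma rank_less_stage: "c < y \<Longrightarrow> y < dd i \<Longrightarrow> rank i < stage y"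
  using finite_bases_strictly_above by (simp add: stage_def le_imp_less_Suc Max_ge)

lemma stage_antimono:
  assumes "c < y'" "y' \<le> y"
  shows "stage y \<le> stage y'"
proof -
  have "Max (insert 0 (rank ` {i. y < dd i})) \<le> Max (insert 0 (rank ` {i. y' < dd i}))"
    using finite_bases_strictly_above[OF assms(1)] assms(2) by (intro Max_mono) auto
  then show ?thesis
    by (simp add: stage_def)
qed

lemma straighten_stable:
  assumes "c < y" "stage y \<le> N"
  shows "straighten N x y = straighten (stage y) x y"
  using assms(2)
proof (induction N rule: dec_induct)
  case (step n)
  have "step n (straighten n) (straighten n x y) y = straighten n x y"
  proof (cases "n \<in> range rank")
    case True
    then have "\<not> y < top_level n"
      using rank_less_stage[OF assms(1), of "trapezoid_of_rank n"] step.hyps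
      by (auto simp: rank_trapezoid_of_rank top_level_def)
    then show ?thesis
      by (simp add: step_above_top)
  qed (simp add: step_def)
  then show ?case
    using step.IH by simp
qed simp

definition straightening :: "real \<times> real \<Rightarrow> real \<times> real" where
  "straightening z = (straighten (stage (snd z)) (fst z) (snd z), snd z)"

lemma continuous_on_straightening: "continuous_on (UNIV \<times> {c<..}) straightening"
proof -
  have cover: "UNIV \<times> {c<..} = (\<Union>y'\<in>{c<..}. UNIV \<times> {y'<..} :: (real \<times> real) set)"
  proof (intro equalityI subsetI)
    fix z :: "real \<times> real"
    assume "z \<in> UNIV \<times> {c<..}"
    then have "(c + snd z) / 2 \<in> {c<..}" "z \<in> UNIV \<times> {(c + snd z) / 2<..}"
      by (auto simp: mem_Times_iff)
    then show "z \<in> (\<Union>y'\<in>{c<..}. UNIV \<times> {y'<..})"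
      by blast
  qed auto
  have "continuous_on (UNIV \<times> {y'<..}) straightening" if "c < y'" for y'
  proof (rule continuous_on_eq)
    have "continuous_on (UNIV \<times> {y'<..}) (\<lambda>z. straighten (stage y') (fst z) (snd z))"
      by (rule continuous_on_subset[OF straightens_continuous[OF straightens_straighten]])
        (use that in auto)
    then show "continuous_on (UNIV \<times> {y'<..}) (\<lambda>z. (straighten (stage y') (fst z) (snd z), snd z))"
      by (intro continuous_intros)
    show "(straighten (stage y') (fst z) (snd z), snd z) = straightening z"
      if "z \<in> UNIV \<times> {y'<..}" for z
      using that \<open>c < y'\<close> straighten_stable[of "snd z" "stage y'"] stage_antimono[of y' "snd z"]
      by (auto simp: straightening_def mem_Times_iff)
  qed
  then have "continuous_on (\<Union>y'\<in>{c<..}. UNIV \<times> {y'<..}) straightening"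
    by (intro continuous_on_open_UN) (auto intro: open_Times)
  then show ?thesis
    using cover by simp
qed

lemma inj_on_straightening: "inj_on straightening (UNIV \<times> {c<..})"
proof (rule inj_onI)
  fix z z'
  assume "z \<in> UNIV \<times> {c<..}" and eq: "straightening z = straightening z'"
  then have "c < snd z" "snd z = snd z'"
    by (auto simp: straightening_def mem_Times_iff)
  moreover have "inj (\<lambda>x. straighten n x (snd z))" for n
    using strict_mono_imp_inj_on[OF straightens_strict_mono[OF straightens_straighten \<open>c < snd z\<close>]] .
  ultimately show "z = z'"
    using eq by (auto simp: straightening_def prod_eq_iff dest: injD)
qed

lemma straightening_image_levels:
  assumes "Y \<subseteq> {c<..}"
  shows "straightening ` (UNIV \<times> Y) = UNIV \<times> Y"
proof
  show "straightening ` (UNIV \<times> Y) \<subseteq> UNIV \<times> Y"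
    by (auto simp: straightening_def)
  show "UNIV \<times> Y \<subseteq> straightening ` (UNIV \<times> Y)"
  proof (intro subsetI)
    fix z :: "real \<times> real"
    assume "z \<in> UNIV \<times> Y"
    then have "c < snd z"
      using assms by (auto simp: mem_Times_iff)
    then obtain x where "fst z = straighten (stage (snd z)) x (snd z)"
      using surjD[OF straightens_surj[OF straightens_straighten]] by blast
    then have "z = straightening (x, snd z)"
      by (simp add: straightening_def prod_eq_iff)
    moreover have "(x, snd z) \<in> UNIV \<times> Y"
      using \<open>z \<in> UNIV \<times> Y\<close> by (simp add: mem_Times_iff)
    ultimately show "z \<in> straightening ` (UNIV \<times> Y)"
      by (rule image_eqI)
  qed
qed

lemma straightening_edges:
  assumes "y \<in> {c<..dd i}"
  shows "straighten (stage y) (\<alpha> i y) y = straighten (stage (dd i)) (\<alpha> i (dd i)) (dd i)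
    \<and> straighten (stage y) (\<beta> i y) y = straighten (stage (dd i)) (\<beta> i (dd i)) (dd i)"
proof -
  define N where "N = max (stage y) (max (stage (dd i)) (Suc (rank i)))"
  have "c < y" "c < dd i"
    using assms c_less_dd[of i] by auto
  then have "straighten N x y = straighten (stage y) x y"
    "straighten N x (dd i) = straighten (stage (dd i)) x (dd i)" for x
    using straighten_stable[of y N x] straighten_stable[of "dd i" N x] by (simp_all add: N_def)
  moreover have "rank i < N"
    by (simp add: N_def)
  then have "straighten N (\<alpha> i y) y = straighten N (\<alpha> i (dd i)) (dd i)
      \<and> straighten N (\<beta> i y) y = straighten N (\<beta> i (dd i)) (dd i)"
    by (rule straightens_edges[OF straightens_straighten _ assms])
  ultimately show ?thesis
    by simp
qed

lemma straighten_between_edges_iff: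
  assumes "y \<in> {c<..dd i}"
  shows "straighten (stage y) x y \<in> {straighten (stage (dd i)) (\<alpha> i (dd i)) (dd i) ..
      straighten (stage (dd i)) (\<beta> i (dd i)) (dd i)} \<longleftrightarrow> \<alpha> i y \<le> x \<and> x \<le> \<beta> i y"
proof -
  have "c < y"
    using assms by simp
  then have mono: "straighten (stage y) a y \<le> straighten (stage y) b y \<longleftrightarrow> a \<le> b" for a b
    by (rule strict_mono_less_eq[OF straightens_strict_mono[OF straightens_straighten]])
  have edges: "straighten (stage (dd i)) (\<alpha> i (dd i)) (dd i) = straighten (stage y) (\<alpha> i y) y"
    "straighten (stage (dd i)) (\<beta> i (dd i)) (dd i) = straighten (stage y) (\<beta> i y) y"
    using straightening_edges[OF assms] by simp_all
  show ?thesis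
    unfolding edges atLeastAtMost_iff mono by (rule refl)
qed

lemma straightening_trapezoid:
  "\<exists>p q. p < q \<and> straightening ` half_open_trapezoid c (dd i) (\<alpha> i) (\<beta> i) = {p..q} \<times> {c<..dd i}"
proof -
  define p q where "p = straighten (stage (dd i)) (\<alpha> i (dd i)) (dd i)"
    and "q = straighten (stage (dd i)) (\<beta> i (dd i)) (dd i)"
  have "p < q"
    using c_less_dd[of i] \<alpha>_less_\<beta>[of "dd i" i]
      strict_monoD[OF straightens_strict_mono[OF straightens_straighten]]
    by (simp add: p_def q_def)
  note level = straighten_between_edges_iff[of _ i, folded p_def q_def]
  have "straightening ` half_open_trapezoid c (dd i) (\<alpha> i) (\<beta> i) = {p..q} \<times> {c<..dd i}"
  proof (intro equalityI subsetI)
    fix z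
    assume "z \<in> straightening ` half_open_trapezoid c (dd i) (\<alpha> i) (\<beta> i)"
    then obtain x y where "\<alpha> i y \<le> x" "x \<le> \<beta> i y" and y: "y \<in> {c<..dd i}"
      and z: "z = straightening (x, y)"
      by (auto simp: half_open_trapezoid_def)
    then have "straighten (stage y) x y \<in> {p..q}"
      using level[OF y] by blast
    then show "z \<in> {p..q} \<times> {c<..dd i}"
      using y z by (simp add: straightening_def)
  next
    fix z
    assume "z \<in> {p..q} \<times> {c<..dd i}"
    then obtain t y where t: "t \<in> {p..q}" and y: "y \<in> {c<..dd i}" and z: "z = (t, y)"
      by blast
    then obtain x where x: "t = straighten (stage y) x y"
      using surjD[OF straightens_surj[OF straightens_straighten]] by (meson greaterThanAtMost_iff)
    then have "(x, y) \<in> half_open_trapezoid c (dd i) (\<alpha> i) (\<beta> i)"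
      using level[OF y] t y by (auto simp: half_open_trapezoid_def)
    moreover have "z = straightening (x, y)"
      using x z by (simp add: straightening_def)
    ultimately show "z \<in> straightening ` half_open_trapezoid c (dd i) (\<alpha> i) (\<beta> i)"
      by blast
  qed
  then show ?thesis
    using \<open>p < q\<close> by blast
qed

end

theorem proposition5p2:
  fixes c d :: real
    and dd :: "nat \<Rightarrow> real"
    and \<alpha> \<beta> :: "nat \<Rightarrow> real \<Rightarrow> real"
  assumes "c < d"
    and "\<And>i. c < dd i \<and> dd i \<le> d"
    and "\<And>i. continuous_on {c<..dd i} (\<alpha> i)"
    and "\<And>i. continuous_on {c<..dd i} (\<beta> i)"
    and "\<And>i y. y \<in> {c<..dd i} \<Longrightarrow> \<alpha> i y < \<beta> i y"
    and "\<And>i j. i \<noteq> j \<Longrightarrow>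
           half_open_trapezoid c (dd i) (\<alpha> i) (\<beta> i) \<inter> half_open_trapezoid c (dd j) (\<alpha> j) (\<beta> j) = {}"
    and "dd \<longlonglongrightarrow> c"
  shows "\<exists>(\<eta> :: real \<times> real \<Rightarrow> real \<times> real) \<eta>'. homeomorphism (UNIV \<times> {c<..d}) (UNIV \<times> {c<..d}) \<eta> \<eta>' \<and>
           (\<forall>y\<in>{c<..d}. \<eta> ` (UNIV \<times> {y}) = UNIV \<times> {y}) \<and>
           (\<forall>i. \<exists>p q :: real. p < q \<and>
              \<eta> ` half_open_trapezoid c (dd i) (\<alpha> i) (\<beta> i) = {p..q} \<times> {c<..dd i})"
proof -
  interpret disjoint_trapezoids c dd \<alpha> \<beta>
    using assms by unfold_locales auto
  have "open (UNIV \<times> {c<..} :: (real \<times> real) set)"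
    by (intro open_Times) auto
  then obtain \<eta>' where "homeomorphism (UNIV \<times> {c<..}) (straightening ` (UNIV \<times> {c<..}))
      straightening \<eta>'"
    using invariance_of_domain_homeomorphism[OF _ continuous_on_straightening _ inj_on_straightening]
    by auto
  then have "homeomorphism (UNIV \<times> {c<..d}) (UNIV \<times> {c<..d}) straightening \<eta>'"
    by (rule homeomorphism_of_subsets[OF _ _ _ straightening_image_levels])
      (auto simp: straightening_image_levels)
  moreover have "\<forall>y\<in>{c<..d}. straightening ` (UNIV \<times> {y}) = UNIV \<times> {y}"
    by (simp add: straightening_image_levels)
  ultimately show ?thesis
    using straightening_trapezoid by blast
qed

end
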